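(* For a real parameter $a\ge \tfrac12$, let $$\rho_a=\frac{1}{3(3+a)}\begin{pmatrix} 1&0&0&0&1&0&0&0&1\\ 0&a&0&1&0&0&0&0&0\\ 0&0&2&0&0&0&1&0&0\\ 0&1&0&2&0&0&0&0&0\\ 1&0&0&0&1&0&0&0&1\\ 0&0&0&0&0&a&0&1&0\\ 0&0&1&0&0&0&a&0&0\\ 0&0&0&0&0&1&0&2&0\\ 1&0&0&0&1&0&0&0&1 \end{pmatrix}$$ in the product basis $|i\rangle|j\rangle$, $i,j\in\{1,2,3\}$, ordered lexicographically, of $\mathbb{C}^3\otimes\mathbb{C}^3$. Let $\Gamma: M_3(\mathbb{C})\to M_3(\mathbb{C})$ be $$\Gamma(A)=\frac12\begin{pmatrix}a_{11}+a_{22}&-a_{12}&-a_{13}\\-a_{21}&a_{22}+a_{33}&-a_{23}\\-a_{31}&-a_{32}&a_{33}+a_{11}\end{pmatrix},\qquad A=(a_{ij}).$$ Then $\rho_a$ is a state whose partial transpose is positive semidefinite, the matrix $(I\otimes\Gamma)(\rho_a)$ has $\frac{a-1}{18+6a}$ as an eigenvalue (with eigenvector $|1\rangle|1\rangle+|2\rangle|2\rangle+|3\rangle|3\rangle$), its coefficient $D_9=-\det\big((I\otimes\Gamma)(\rho_a)\big)$ is strictly positive whenever $\tfrac12\le a<1$, and consequently $\rho_a$ is entangled for every $a$ with $\tfrac12\le a<1$.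
   Context: A state on $\mathbb{C}^3\otimes\mathbb{C}^3$ is a positive semidefinite $9\times 9$ matrix of trace one; it is separable if it is a convex combination of product states $\rho_A\otimes\rho_B$, and entangled otherwise. The partial transpose $\rho^{T_B}$ is defined by $\langle m|\langle\mu|\rho^{T_B}|n\rangle|\nu\rangle=\langle m|\langle\nu|\rho|n\rangle|\mu\rangle$. $(I\otimes\Gamma)(\rho)$ means applying $\Gamma$ to each $3\times3$ block $\rho_{(i,\cdot),(k,\cdot)}$ of $\rho$ (blocks indexed by the first factor). $D_9$ denotes the constant coefficient in $\det(\lambda I-M)=\lambda^9+D_1\lambda^8+\cdots+D_9$ for $M=(I\otimes\Gamma)(\rho_a)$. The map $\Gamma$ is a positive (indecomposable) linear map, i.e., it maps positive semidefinite matrices to positive semidefinite matrices. *)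

theory Defs
  imports "Jordan_Normal_Form.Char_Poly"
begin

text \<open>Matrices on C^3 (x) C^3 are 9x9 complex matrices (Jordan_Normal_Form type mat);
 basis vector |i>|j> (i,j in {0,1,2}) has index 3*i+j (lexicographic order).\<close>

definition psd :: "nat \<Rightarrow> complex mat \<Rightarrow> bool" where
  "psd n A \<longleftrightarrow> A \<in> carrier_mat n n
     \<and> (\<forall>i<n. \<forall>j<n. A $$ (i,j) = cnj (A $$ (j,i)))
     \<and> (\<forall>v \<in> carrier_vec n.
          let q = (\<Sum>i<n. \<Sum>j<n. cnj (v $ i) * A $$ (i,j) * v $ j)
          in Im q = 0 \<and> Re q \<ge> 0)"

definition is_state :: "nat \<Rightarrow> complex mat \<Rightarrow> bool" where
  "is_state n A \<longleftrightarrow> psd n A \<and> (\<Sum>i<n. A $$ (i,i)) = 1"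

definition tensor33 :: "complex mat \<Rightarrow> complex mat \<Rightarrow> complex mat" where
  "tensor33 A B = mat 9 9 (\<lambda>(r,c). A $$ (r div 3, c div 3) * B $$ (r mod 3, c mod 3))"

definition separable :: "complex mat \<Rightarrow> bool" where
  "separable \<rho> \<longleftrightarrow> (\<exists>(n::nat) (p::nat \<Rightarrow> real) (\<rho>A::nat \<Rightarrow> complex mat) \<rho>B.
      (\<forall>k<n. p k \<ge> 0 \<and> is_state 3 (\<rho>A k) \<and> is_state 3 (\<rho>B k))
      \<and> (\<Sum>k<n. p k) = 1
      \<and> \<rho> = mat 9 9 (\<lambda>(r,c). \<Sum>k<n. complex_of_real (p k) * tensor33 (\<rho>A k) (\<rho>B k) $$ (r,c)))"

definition entangled :: "complex mat \<Rightarrow> bool" where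
  "entangled \<rho> \<longleftrightarrow> is_state 9 \<rho> \<and> \<not> separable \<rho>"

definition partial_transpose_B :: "complex mat \<Rightarrow> complex mat" where
  "partial_transpose_B \<rho> = mat 9 9 (\<lambda>(r,c).
      \<rho> $$ (3 * (r div 3) + c mod 3, 3 * (c div 3) + r mod 3))"

definition Gamma :: "complex mat \<Rightarrow> complex mat" where
  "Gamma A = mat 3 3 (\<lambda>(i,j). if i = j
      then (A $$ (i,i) + A $$ ((i+1) mod 3, (i+1) mod 3)) / 2
      else - A $$ (i,j) / 2)"

definition block33 :: "complex mat \<Rightarrow> nat \<Rightarrow> nat \<Rightarrow> complex mat" where
  "block33 M i k = mat 3 3 (\<lambda>(m,n). M $$ (3*i + m, 3*k + n))"

definition id_tensor_map :: "(complex mat \<Rightarrow> complex mat) \<Rightarrow> complex mat \<Rightarrow> complex mat" where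
  "id_tensor_map \<Phi> M = mat 9 9 (\<lambda>(r,c). \<Phi> (block33 M (r div 3) (c div 3)) $$ (r mod 3, c mod 3))"

definition rho_a :: "real \<Rightarrow> complex mat" where
  "rho_a a = (complex_of_real (1 / (3 * (3 + a)))) \<cdot>\<^sub>m mat_of_rows_list 9 (
    let x = complex_of_real a in
    [[1,0,0,0,1,0,0,0,1],
     [0,x,0,1,0,0,0,0,0],
     [0,0,2,0,0,0,1,0,0],
     [0,1,0,2,0,0,0,0,0],
     [1,0,0,0,1,0,0,0,1],
     [0,0,0,0,0,x,0,1,0],
     [0,0,1,0,0,0,x,0,0],
     [0,0,0,0,0,1,0,2,0],
     [1,0,0,0,1,0,0,0,1]])"

definition max_ent_vec :: "complex vec" where
  "max_ent_vec = vec 9 (\<lambda>i. if i \<in> {0,4,8} then 1 else 0)"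

end

(*
  For a \<ge> 1/2 the quadratic form of rho_a is a sum of Hermitian squares with
  nonnegative weights, and rho_a is invariant under the partial transpose.  Up to the factor
  1/(6(3+a)), (I \<otimes> Gamma)(rho_a) becomes block diagonal after reordering the basis: a 3x3 block on
  span{|00>,|11>,|22>} with eigenvalues a-1, a+2, a+2 (the first one on |00>+|11>+|22>), and three
  2x2 blocks of determinant 3a+5.  This gives the eigenvector and D_9.

  Entanglement is detected by the witness sigma \<mapsto> <psi|(I \<otimes> Gamma)(sigma)|psi>, psi = |00>+|11>+|22>.
  On a product state A \<otimes> B it equals sum_ik A_ik Gamma(B)_ik; the Cauchy-Schwarz bounds
  |A_ik| \<le> sqrt(A_ii A_kk), |B_ik| \<le> sqrt(B_ii B_kk) reduce its nonnegativity to Choi's biquadratic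
  inequality, itself a consequence of the cyclic AM-GM inequality.  By linearity the witness is
  nonnegative on separable states, while on rho_a it is 3(a-1)/(18+6a) < 0 when a < 1.
*)

theory Submission
  imports Defs
begin

lemma sum_lessThan_3: "(\<Sum>i<(3::nat). f i) = f 0 + f 1 + (f 2 :: 'a :: comm_monoid_add)"
  by (simp add: eval_nat_numeral lessThan_Suc ac_simps)

lemma sum_lessThan_9:
  "(\<Sum>i<(9::nat). f i) = f 0 + f 1 + f 2 + f 3 + f 4 + f 5 + f 6 + f 7 + (f 8 :: 'a :: comm_monoid_add)"
  by (simp add: eval_nat_numeral lessThan_Suc ac_simps)

lemma less_9_cases: "(i::nat) < 9 \<Longrightarrow> i = 0 \<or> i = 1 \<or> i = 2 \<or> i = 3 \<or> i = 4 \<or> i = 5 \<or> i = 6 \<or> i = 7 \<or> i = 8"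
  by auto

lemma if_zero_distribs:
  fixes u z :: complex
  shows "(if P then u else 0) * z = (if P then u * z else 0)"
    and "z * (if P then u else 0) = (if P then z * u else 0)"
    and "cnj (if P then u else 0) = (if P then cnj u else 0)"
  by simp_all

lemma det_2x2:
  assumes "(A :: 'a :: comm_ring_1 mat) \<in> carrier_mat 2 2"
  shows "det A = A $$ (0,0) * A $$ (1,1) - A $$ (0,1) * A $$ (1,0)"
  using laplace_expansion_column[OF assms, of 0] assms
  by (simp add: numeral_2_eq_2 cofactor_def det_single mat_delete_def)

lemma det_3x3:
  assumes "(A :: 'a :: comm_ring_1 mat) \<in> carrier_mat 3 3"
  shows "det A = A $$ (0,0) * (A $$ (1,1) * A $$ (2,2) - A $$ (1,2) * A $$ (2,1))
     - A $$ (1,0) * (A $$ (0,1) * A $$ (2,2) - A $$ (0,2) * A $$ (2,1))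
     + A $$ (2,0) * (A $$ (0,1) * A $$ (1,2) - A $$ (0,2) * A $$ (1,1))"
proof -
  have minor: "det (mat (Suc (Suc 0)) (Suc (Suc 0)) f) = f (0,0) * f (1,1) - f (0,1) * f (1,0)" for f
    by (subst det_2x2) (auto simp: numeral_2_eq_2)
  show ?thesis
    using laplace_expansion_column[OF assms, of 0] assms
    by (simp add: numeral_3_eq_3 cofactor_def minor mat_delete_def eval_nat_numeral algebra_simps)
qed

lemma det_permute_rows_cols:
  assumes A: "(A :: 'a :: comm_ring_1 mat) \<in> carrier_mat n n" and p: "p permutes {0..<n}"
  shows "det (mat n n (\<lambda>(i,j). A $$ (p i, p j))) = det A"
proof -
  define N where "N = mat n n (\<lambda>(i,j). A $$ (p i, j))"
  have N: "N \<in> carrier_mat n n" by (simp add: N_def)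
  have p_less: "i < n \<Longrightarrow> p i < n" for i
    using p by (meson atLeastLessThan_iff permutes_in_image zero_le)
  have "transpose_mat (mat n n (\<lambda>(i,j). A $$ (p i, p j))) = mat n n (\<lambda>(i,j). transpose_mat N $$ (p i, j))"
    by (rule eq_matI) (auto simp: N_def p_less)
  then have "det (mat n n (\<lambda>(i,j). A $$ (p i, p j))) = signof p * det (transpose_mat N)"
    using det_transpose[of "mat n n (\<lambda>(i,j). A $$ (p i, p j))" n] det_permute_rows[of "transpose_mat N" n p] N p
    by simp
  also have "\<dots> = signof p * (signof p * det A)"
    using det_transpose[OF N] det_permute_rows[OF A p] by (simp add: N_def)
  also have "\<dots> = of_int (sign p * sign p) * det A"
    by (simp only: of_int_mult mult.assoc)
  also have "\<dots> = det A"
    by simp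
  finally show ?thesis .
qed

lemma coeff_char_poly_0:
  assumes "(A :: 'a :: field mat) \<in> carrier_mat n n"
  shows "coeff (char_poly A) 0 = (-1) ^ n * det A"
proof -
  have "char_matrix A 0 = A"
    using assms by (intro eq_matI) (auto simp: char_matrix_def)
  moreover have "- A = (-1) \<cdot>\<^sub>m A"
    using assms by (intro eq_matI) auto
  ultimately show ?thesis
    using char_poly_matrix[OF assms, of 0] assms by (simp add: poly_0_coeff_0)
qed

lemma smult_mat_mult_mat_vec:
  "dim_col A = dim_vec v \<Longrightarrow> (k \<cdot>\<^sub>m A) *\<^sub>v v = k \<cdot>\<^sub>v (A *\<^sub>v (v :: 'a :: comm_ring vec))"
  by (intro eq_vecI) (auto simp: scalar_prod_def sum_distrib_left mult.assoc intro!: sum.cong)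

lemma eigenvector_quadratic_form: "eigenvector A v k \<Longrightarrow> v \<bullet> (A *\<^sub>v v) = k * (v \<bullet> v)"
  by (simp add: eigenvector_def)

lemma quadratic_form_two_point:
  fixes A :: "complex mat" and x y :: complex
  assumes "i < n" "k < n" "i \<noteq> k"
  defines "v \<equiv> vec n (\<lambda>m. (if m = i then x else 0) + (if m = k then y else 0))"
  shows "(\<Sum>j<n. \<Sum>l<n. cnj (v $ j) * A $$ (j,l) * v $ l)
    = cnj x * A $$ (i,i) * x + cnj x * A $$ (i,k) * y + cnj y * A $$ (k,i) * x + cnj y * A $$ (k,k) * y"
  using assms by (simp add: v_def if_zero_distribs distrib_left distrib_right sum.distrib)

lemma quadratic_form_unit_vec:
  fixes A :: "complex mat"
  assumes "i < n"
  shows "(\<Sum>j<n. \<Sum>l<n. cnj (unit_vec n i $ j) * A $$ (j,l) * unit_vec n i $ l) = A $$ (i,i)"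
  using assms by (simp add: unit_vec_def if_zero_distribs)

lemma psd_quadratic_form:
  assumes "psd n A" "v \<in> carrier_vec n"
  shows "Im (\<Sum>i<n. \<Sum>j<n. cnj (v $ i) * A $$ (i,j) * v $ j) = 0"
    and "Re (\<Sum>i<n. \<Sum>j<n. cnj (v $ i) * A $$ (i,j) * v $ j) \<ge> 0"
  using assms unfolding psd_def Let_def by blast+

lemma psd_hermitian: "psd n A \<Longrightarrow> i < n \<Longrightarrow> j < n \<Longrightarrow> A $$ (i,j) = cnj (A $$ (j,i))"
  unfolding psd_def by blast

lemma psd_diag_real: "psd n A \<Longrightarrow> i < n \<Longrightarrow> A $$ (i,i) = complex_of_real (Re (A $$ (i,i)))"
  using psd_hermitian[of n A i i] by (metis Reals_cnj_iff complex_is_Real_iff of_real_Re)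

lemma psd_diag_nonneg: assumes "psd n A" "i < n" shows "Re (A $$ (i,i)) \<ge> 0"
  using psd_quadratic_form(2)[OF assms(1), of "unit_vec n i"]
  unfolding quadratic_form_unit_vec[OF assms(2)] by simp

lemma psd_offdiag_bound:
  assumes A: "psd n A" and ik: "i < n" "k < n" "i \<noteq> k"
  shows "(cmod (A $$ (i,k)))\<^sup>2 \<le> Re (A $$ (i,i)) * Re (A $$ (k,k))"
proof -
  define \<alpha> \<beta> c m where "\<alpha> = Re (A $$ (i,i))" and "\<beta> = Re (A $$ (k,k))"
    and "c = A $$ (i,k)" and "m = (cmod c)\<^sup>2"
  have \<alpha>: "\<alpha> \<ge> 0" and \<beta>: "\<beta> \<ge> 0" and m: "m \<ge> 0"
    using psd_diag_nonneg[OF A] ik by (auto simp: \<alpha>_def \<beta>_def m_def)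
  have Q: "0 \<le> \<alpha> * s\<^sup>2 - 2 * m * s * t + \<beta> * m * t\<^sup>2" for s t :: real
  proof -
    define x y where "x = complex_of_real s" and "y = - complex_of_real t * cnj c"
    have "A $$ (i,i) = complex_of_real \<alpha>" "A $$ (k,k) = complex_of_real \<beta>" "A $$ (k,i) = cnj c"
      using psd_diag_real[OF A] psd_hermitian[OF A ik(2,1)] ik by (simp_all add: \<alpha>_def \<beta>_def c_def)
    then have "cnj x * A $$ (i,i) * x + cnj x * A $$ (i,k) * y + cnj y * A $$ (k,i) * x + cnj y * A $$ (k,k) * y
        = complex_of_real \<alpha> * complex_of_real s ^ 2 - 2 * (c * cnj c) * complex_of_real s * complex_of_real t
          + complex_of_real \<beta> * (c * cnj c) * complex_of_real t ^ 2"
      by (simp add: x_def y_def c_def power2_eq_square algebra_simps)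
    also have "c * cnj c = complex_of_real m"
      by (simp only: m_def complex_norm_square)
    finally have eq: "cnj x * A $$ (i,i) * x + cnj x * A $$ (i,k) * y + cnj y * A $$ (k,i) * x + cnj y * A $$ (k,k) * y
        = complex_of_real (\<alpha> * s\<^sup>2 - 2 * m * s * t + \<beta> * m * t\<^sup>2)"
      by simp
    have "0 \<le> Re (\<Sum>j<n. \<Sum>l<n. cnj (vec n (\<lambda>m. (if m = i then x else 0) + (if m = k then y else 0)) $ j)
        * A $$ (j,l) * vec n (\<lambda>m. (if m = i then x else 0) + (if m = k then y else 0)) $ l)"
      by (rule psd_quadratic_form(2)[OF A]) simp
    then show ?thesis
      unfolding quadratic_form_two_point[OF ik] eq Re_complex_of_real .
  qed
  txt \<open>\<open>Q\<close> is a nonnegative binary quadratic form, so its discriminant \<open>m\<^sup>2 - \<alpha> \<beta> m\<close> is nonpositive.\<close>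
  consider "m = 0" | "m > 0" "\<alpha> > 0" | "m > 0" "\<alpha> = 0" using \<alpha> m by linarith
  then have "m \<le> \<alpha> * \<beta>"
  proof cases
    case 1
    then show ?thesis using \<alpha> \<beta> by simp
  next
    case 2
    have "0 \<le> \<alpha> * m * (\<alpha> * \<beta> - m)"
      using Q[of m \<alpha>] by (simp add: power2_eq_square algebra_simps)
    moreover have "\<alpha> * m > 0" using 2 by simp
    ultimately show ?thesis by (simp add: zero_le_mult_iff)
  next
    case 3
    have "0 \<le> - m * (\<beta> + 2)"
      using Q[of "\<beta> + 1" 1] 3 by (simp add: power2_eq_square algebra_simps)
    with 3 \<beta> show ?thesis by (simp add: mult_le_0_iff)
  qed
  then show ?thesis by (simp add: \<alpha>_def \<beta>_def m_def c_def)
qed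

lemma psd_offdiag_product_bound:
  assumes A: "psd n A" and B: "psd n B" and ik: "i < n" "k < n" "i \<noteq> k"
  shows "Re (A $$ (i,k) * B $$ (i,k))
    \<le> sqrt (Re (A $$ (i,i))) * sqrt (Re (A $$ (k,k))) * (sqrt (Re (B $$ (i,i))) * sqrt (Re (B $$ (k,k))))"
proof -
  have "cmod (A $$ (i,k)) \<le> sqrt (Re (A $$ (i,i))) * sqrt (Re (A $$ (k,k)))"
       "cmod (B $$ (i,k)) \<le> sqrt (Re (B $$ (i,i))) * sqrt (Re (B $$ (k,k)))"
    using psd_offdiag_bound[OF A ik] psd_offdiag_bound[OF B ik]
    by (simp_all add: real_le_rsqrt real_sqrt_mult[symmetric])
  then have "cmod (A $$ (i,k)) * cmod (B $$ (i,k))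
      \<le> sqrt (Re (A $$ (i,i))) * sqrt (Re (A $$ (k,k))) * (sqrt (Re (B $$ (i,i))) * sqrt (Re (B $$ (k,k))))"
    using psd_diag_nonneg[OF A] psd_diag_nonneg[OF B] ik by (intro mult_mono) auto
  moreover have "Re (A $$ (i,k) * B $$ (i,k)) \<le> cmod (A $$ (i,k)) * cmod (B $$ (i,k))"
    using complex_Re_le_cmod[of "A $$ (i,k) * B $$ (i,k)"] by (simp add: norm_mult)
  ultimately show ?thesis by linarith
qed

lemma amgm_cyclic3:
  fixes y0 y1 y2 :: real
  assumes "0 \<le> y0" "0 \<le> y1" "0 \<le> y2"
  shows "3 * y0 * y1 * y2 \<le> y0\<^sup>2 * y2 + y0 * y1\<^sup>2 + y1 * y2\<^sup>2"
proof -
  have min_case: "3 * u * v * w \<le> u\<^sup>2 * w + u * v\<^sup>2 + v * w\<^sup>2"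
    if "0 \<le> u" "u \<le> v" "u \<le> w" for u v w :: real
  proof -
    define s t where "s = v - u" and "t = w - u"
    have "4 * (u\<^sup>2 * w + u * v\<^sup>2 + v * w\<^sup>2 - 3 * u * v * w) = u * ((2 * s - t)\<^sup>2 + 3 * t\<^sup>2) + 4 * s * t\<^sup>2"
      by (simp add: s_def t_def power2_eq_square algebra_simps)
    also have "\<dots> \<ge> 0"
      using that by (simp add: s_def)
    finally show ?thesis by simp
  qed
  consider "y0 \<le> y1" "y0 \<le> y2" | "y1 \<le> y0" "y1 \<le> y2" | "y2 \<le> y0" "y2 \<le> y1" by linarith
  then show ?thesis
  proof cases
    case 1
    then show ?thesis using min_case[of y0 y1 y2] assms by simp
  next
    case 2
    then show ?thesis using min_case[of y1 y2 y0] assms by (simp add: algebra_simps)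
  next
    case 3
    then show ?thesis using min_case[of y2 y0 y1] assms by (simp add: algebra_simps)
  qed
qed

lemma choi_biquadratic_nonneg:
  fixes a b c x y z :: real
  shows "2 * (a * b * x * y + a * c * x * z + b * c * y * z)
    \<le> a\<^sup>2 * x\<^sup>2 + a\<^sup>2 * y\<^sup>2 + b\<^sup>2 * y\<^sup>2 + b\<^sup>2 * z\<^sup>2 + c\<^sup>2 * z\<^sup>2 + c\<^sup>2 * x\<^sup>2"
    (is "?L \<le> ?R")
proof -
  define e0 e1 e2 where "e0 = 2 * x\<^sup>2 + y\<^sup>2" and "e1 = 2 * y\<^sup>2 + z\<^sup>2" and "e2 = 2 * z\<^sup>2 + x\<^sup>2"
  define N where "N = (x\<^sup>2)\<^sup>2 * z\<^sup>2 + x\<^sup>2 * (y\<^sup>2)\<^sup>2 + y\<^sup>2 * (z\<^sup>2)\<^sup>2 - 3 * x\<^sup>2 * y\<^sup>2 * z\<^sup>2"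
  have e: "e0 \<ge> 0" "e1 \<ge> 0" "e2 \<ge> 0" by (simp_all add: e0_def e1_def e2_def)
  have N: "N \<ge> 0" using amgm_cyclic3[of "x\<^sup>2" "y\<^sup>2" "z\<^sup>2"] by (simp add: N_def)
  have "e0 * e1 * e2 * (?R - ?L) = (e0 * a\<^sup>2 + e1 * b\<^sup>2 + e2 * c\<^sup>2) * N
      + e2 * (e0 * a * y - e1 * b * x)\<^sup>2 + e1 * (e0 * a * z - e2 * c * x)\<^sup>2
      + e0 * (e1 * b * z - e2 * c * y)\<^sup>2"
    by (simp add: e0_def e1_def e2_def N_def power2_eq_square algebra_simps)
  also have "\<dots> \<ge> 0" using e N by (intro add_nonneg_nonneg mult_nonneg_nonneg) auto
  finally have prod: "e0 * e1 * e2 * (?R - ?L) \<ge> 0" .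
  show ?thesis
  proof (cases "e0 = 0 \<or> e1 = 0 \<or> e2 = 0")
    case True
    then have "(x = 0 \<and> y = 0) \<or> (y = 0 \<and> z = 0) \<or> (z = 0 \<and> x = 0)"
      by (auto simp: e0_def e1_def e2_def add_nonneg_eq_0_iff)
    then show ?thesis by (elim disjE) (auto simp: power2_eq_square)
  next
    case False
    then have "e0 * e1 * e2 > 0" using e by (simp add: less_le)
    with prod show ?thesis by (simp add: zero_le_mult_iff)
  qed
qed

lemma Gamma_pairing:
  "2 * (\<Sum>i<3. \<Sum>k<3. A $$ (i,k) * Gamma B $$ (i,k))
    = A $$ (0,0) * (B $$ (0,0) + B $$ (1,1)) + A $$ (1,1) * (B $$ (1,1) + B $$ (2,2))
      + A $$ (2,2) * (B $$ (2,2) + B $$ (0,0))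
      - (A $$ (0,1) * B $$ (0,1) + A $$ (1,0) * B $$ (1,0) + A $$ (0,2) * B $$ (0,2)
        + A $$ (2,0) * B $$ (2,0) + A $$ (1,2) * B $$ (1,2) + A $$ (2,1) * B $$ (2,1))"
  by (simp add: Gamma_def sum_lessThan_3 add_divide_distrib numeral_2_eq_2 algebra_simps)

text \<open>The pairing is \<open>\<langle>\<psi>|A \<otimes> \<Gamma>(B)|\<psi>\<rangle>\<close>; its nonnegativity is the only
  consequence of the positivity of \<open>\<Gamma>\<close> that the entanglement argument needs.\<close>

lemma choi_pairing_nonneg:
  assumes A: "psd 3 A" and B: "psd 3 B"
  shows "0 \<le> Re (\<Sum>i<3. \<Sum>k<3. A $$ (i,k) * Gamma B $$ (i,k))"
proof -
  define p where "p i = sqrt (Re (A $$ (i,i)))" for i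
  define q where "q i = sqrt (Re (B $$ (i,i)))" for i
  define P where "P = (p 0)\<^sup>2 * (q 0)\<^sup>2 + (p 0)\<^sup>2 * (q 1)\<^sup>2 + (p 1)\<^sup>2 * (q 1)\<^sup>2
    + (p 1)\<^sup>2 * (q 2)\<^sup>2 + (p 2)\<^sup>2 * (q 2)\<^sup>2 + (p 2)\<^sup>2 * (q 0)\<^sup>2"
  define r where "r i k = Re (A $$ (i,k) * B $$ (i,k))" for i k
  have diag: "A $$ (i,i) = complex_of_real ((p i)\<^sup>2)" "B $$ (i,i) = complex_of_real ((q i)\<^sup>2)" if "i < 3" for i
    using that psd_diag_real[OF A] psd_diag_real[OF B] psd_diag_nonneg[OF A] psd_diag_nonneg[OF B]
    by (simp_all add: p_def q_def)
  have off: "r i k + r k i \<le> 2 * (p i * p k * q i * q k)" if "i < 3" "k < 3" "i \<noteq> k" for i k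
  proof -
    have "r i k \<le> p i * p k * (q i * q k)" "r k i \<le> p k * p i * (q k * q i)"
      unfolding r_def p_def q_def using that by (intro psd_offdiag_product_bound[OF A B]; simp)+
    then show ?thesis by (simp add: mult_ac)
  qed
  have pairing: "2 * (\<Sum>i<3. \<Sum>k<3. A $$ (i,k) * Gamma B $$ (i,k))
      = complex_of_real P - (A $$ (0,1) * B $$ (0,1) + A $$ (1,0) * B $$ (1,0) + A $$ (0,2) * B $$ (0,2)
        + A $$ (2,0) * B $$ (2,0) + A $$ (1,2) * B $$ (1,2) + A $$ (2,1) * B $$ (2,1))"
    unfolding Gamma_pairing by (simp add: diag P_def algebra_simps)
  have "2 * Re (\<Sum>i<3. \<Sum>k<3. A $$ (i,k) * Gamma B $$ (i,k))
      = Re (2 * (\<Sum>i<3. \<Sum>k<3. A $$ (i,k) * Gamma B $$ (i,k)))"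
    by simp
  also have "\<dots> = P - (r 0 1 + r 1 0 + r 0 2 + r 2 0 + r 1 2 + r 2 1)"
    by (simp only: pairing r_def minus_complex.sel plus_complex.sel Re_complex_of_real)
  also have "\<dots> \<ge> 0"
    using off[of 0 1] off[of 0 2] off[of 1 2]
      choi_biquadratic_nonneg[where a = "p 0" and b = "p 1" and c = "p 2" and x = "q 0" and y = "q 1" and z = "q 2"]
    unfolding P_def by simp
  finally show ?thesis by simp
qed

lemma max_ent_vec_carrier [simp]: "max_ent_vec \<in> carrier_vec 9" "dim_vec max_ent_vec = 9"
  by (simp_all add: max_ent_vec_def)

lemma max_ent_vec_quadratic_form:
  assumes "M \<in> carrier_mat 9 9"
  shows "max_ent_vec \<bullet> (M *\<^sub>v max_ent_vec) = M $$ (0,0) + M $$ (0,4) + M $$ (0,8)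
    + M $$ (4,0) + M $$ (4,4) + M $$ (4,8) + M $$ (8,0) + M $$ (8,4) + M $$ (8,8)"
  using assms
  by (simp add: scalar_prod_def max_ent_vec_def atLeast0LessThan sum_lessThan_9
      if_distrib[of "\<lambda>z. z * _"] cong: if_cong)

definition choi_witness :: "complex mat \<Rightarrow> complex" where
  "choi_witness \<rho> = max_ent_vec \<bullet> (id_tensor_map Gamma \<rho> *\<^sub>v max_ent_vec)"

lemma choi_witness_entries:
  "2 * choi_witness \<rho> = \<rho> $$ (0,0) + \<rho> $$ (1,1) + \<rho> $$ (4,4) + \<rho> $$ (5,5) + \<rho> $$ (8,8) + \<rho> $$ (6,6)
     - (\<rho> $$ (0,4) + \<rho> $$ (0,8) + \<rho> $$ (4,0) + \<rho> $$ (4,8) + \<rho> $$ (8,0) + \<rho> $$ (8,4))"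
  unfolding choi_witness_def
  by (subst max_ent_vec_quadratic_form)
     (simp_all add: id_tensor_map_def Gamma_def block33_def add_divide_distrib diff_divide_distrib algebra_simps)

lemma choi_witness_mixture:
  "choi_witness (mat 9 9 (\<lambda>(r,c). \<Sum>k<n. w k * \<sigma> k $$ (r,c))) = (\<Sum>k<n. w k * choi_witness (\<sigma> k))"
proof -
  have "2 * choi_witness (mat 9 9 (\<lambda>(r,c). \<Sum>k<n. w k * \<sigma> k $$ (r,c)))
      = (\<Sum>k<n. w k * (2 * choi_witness (\<sigma> k)))"
    unfolding choi_witness_entries by (simp add: distrib_left right_diff_distrib sum.distrib sum_subtractf)
  then show ?thesis by (simp add: sum_distrib_left[symmetric] mult.left_commute[of _ 2])
qed

lemma choi_witness_tensor:
  "choi_witness (tensor33 A B) = (\<Sum>i<3. \<Sum>k<3. A $$ (i,k) * Gamma B $$ (i,k))"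
proof -
  have "2 * choi_witness (tensor33 A B) = 2 * (\<Sum>i<3. \<Sum>k<3. A $$ (i,k) * Gamma B $$ (i,k))"
    unfolding choi_witness_entries Gamma_pairing by (simp add: tensor33_def numeral_2_eq_2 algebra_simps)
  then show ?thesis by simp
qed

lemma separable_choi_witness_nonneg:
  assumes "separable \<rho>"
  shows "0 \<le> Re (choi_witness \<rho>)"
proof -
  obtain n :: nat and p :: "nat \<Rightarrow> real" and \<rho>A \<rho>B :: "nat \<Rightarrow> complex mat"
    where states: "\<forall>k<n. p k \<ge> 0 \<and> is_state 3 (\<rho>A k) \<and> is_state 3 (\<rho>B k)"
    and \<rho>: "\<rho> = mat 9 9 (\<lambda>(r,c). \<Sum>k<n. complex_of_real (p k) * tensor33 (\<rho>A k) (\<rho>B k) $$ (r,c))"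
    using assms unfolding separable_def by blast
  have "Re (choi_witness \<rho>) = (\<Sum>k<n. p k * Re (choi_witness (tensor33 (\<rho>A k) (\<rho>B k))))"
    unfolding \<rho> choi_witness_mixture by simp
  also have "\<dots> \<ge> 0"
    using states choi_pairing_nonneg unfolding is_state_def choi_witness_tensor
    by (intro sum_nonneg) simp
  finally show ?thesis .
qed

definition rho_norm :: "real \<Rightarrow> complex" where
  "rho_norm a = complex_of_real (1 / (3 * (3 + a)))"

lemma cnj_rho_norm: "cnj (rho_norm a) = rho_norm a"
  by (simp add: rho_norm_def)

lemmas rho_a_scaled = rho_a_def[folded rho_norm_def, unfolded Let_def]

lemma rho_a_carrier: "rho_a a \<in> carrier_mat 9 9"
  by (simp add: rho_a_scaled mat_of_rows_list_def numeral_eq_Suc)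

lemma rho_a_dims [simp]: "dim_row (rho_a a) = 9" "dim_col (rho_a a) = 9"
  using rho_a_carrier[of a] by auto

lemma rho_a_hermitian: "i < 9 \<Longrightarrow> j < 9 \<Longrightarrow> rho_a a $$ (i,j) = cnj (rho_a a $$ (j,i))"
  by (drule less_9_cases, drule less_9_cases, elim disjE)
     (simp_all add: rho_a_scaled mat_of_rows_list_def cnj_rho_norm)

lemma rho_a_quadratic_form:
  "(\<Sum>i<9. \<Sum>j<9. cnj (v $ i) * rho_a a $$ (i,j) * v $ j) =
    rho_norm a * (cnj (v $ 0 + v $ 4 + v $ 8) * (v $ 0 + v $ 4 + v $ 8)
    + (complex_of_real a - 1/2) * (cnj (v $ 1) * v $ 1 + cnj (v $ 5) * v $ 5 + cnj (v $ 6) * v $ 6)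
    + 1/2 * (cnj (v $ 1 + 2 * v $ 3) * (v $ 1 + 2 * v $ 3) + cnj (v $ 6 + 2 * v $ 2) * (v $ 6 + 2 * v $ 2)
      + cnj (v $ 5 + 2 * v $ 7) * (v $ 5 + 2 * v $ 7)))"
  by (simp add: rho_a_scaled sum_lessThan_9 mat_of_rows_list_def algebra_simps)

lemma rho_a_psd:
  assumes "a \<ge> 1/2"
  shows "psd 9 (rho_a a)"
  unfolding psd_def Let_def
proof (intro conjI allI impI ballI)
  show "rho_a a \<in> carrier_mat 9 9"
    by (rule rho_a_carrier)
  show "rho_a a $$ (i,j) = cnj (rho_a a $$ (j,i))" if "i < 9" "j < 9" for i j
    using that by (rule rho_a_hermitian)
  fix v :: "complex vec"
  have norm_sq: "cnj z * z = complex_of_real ((cmod z)\<^sup>2)" for z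
    by (metis complex_norm_square mult.commute)
  define Q where "Q = 1 / (3 * (3 + a)) * ((cmod (v $ 0 + v $ 4 + v $ 8))\<^sup>2
    + (a - 1/2) * ((cmod (v $ 1))\<^sup>2 + (cmod (v $ 5))\<^sup>2 + (cmod (v $ 6))\<^sup>2)
    + 1/2 * ((cmod (v $ 1 + 2 * v $ 3))\<^sup>2 + (cmod (v $ 6 + 2 * v $ 2))\<^sup>2 + (cmod (v $ 5 + 2 * v $ 7))\<^sup>2))"
  have Q: "(\<Sum>i<9. \<Sum>j<9. cnj (v $ i) * rho_a a $$ (i,j) * v $ j) = complex_of_real Q"
    unfolding rho_a_quadratic_form norm_sq Q_def rho_norm_def by simp
  have "Q \<ge> 0"
    unfolding Q_def using assms by (intro mult_nonneg_nonneg add_nonneg_nonneg) auto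
  then show "Im (\<Sum>i<9. \<Sum>j<9. cnj (v $ i) * rho_a a $$ (i,j) * v $ j) = 0"
    and "0 \<le> Re (\<Sum>i<9. \<Sum>j<9. cnj (v $ i) * rho_a a $$ (i,j) * v $ j)"
    unfolding Q by simp_all
qed

lemma rho_a_trace:
  assumes "a \<ge> 0"
  shows "(\<Sum>i<9. rho_a a $$ (i,i)) = 1"
proof -
  have "(\<Sum>i<9. rho_a a $$ (i,i)) = rho_norm a * (9 + 3 * complex_of_real a)"
    by (simp add: rho_a_scaled sum_lessThan_9 mat_of_rows_list_def algebra_simps)
  also have "9 + 3 * complex_of_real a = complex_of_real (3 * (3 + a))"
    by simp
  also have "rho_norm a * complex_of_real (3 * (3 + a)) = 1"
    unfolding rho_norm_def of_real_mult[symmetric] using assms by simp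
  finally show ?thesis .
qed

lemma partial_transpose_rho_a: "partial_transpose_B (rho_a a) = rho_a a"
proof (rule eq_matI)
  fix i j assume "i < dim_row (rho_a a)" "j < dim_col (rho_a a)"
  then have "i < 9" "j < 9" by simp_all
  then show "partial_transpose_B (rho_a a) $$ (i,j) = rho_a a $$ (i,j)"
    by (drule_tac less_9_cases, drule_tac less_9_cases, elim disjE)
       (simp_all add: partial_transpose_B_def rho_a_scaled mat_of_rows_list_def)
qed (simp_all add: partial_transpose_B_def)

definition Gamma_rho_matrix :: "complex \<Rightarrow> complex mat" where
  "Gamma_rho_matrix x = mat_of_rows_list 9
   [[1+x, 0, 0, 0, -1, 0, 0, 0, -1],
    [0, x+2, 0, -1, 0, 0, 0, 0, 0],
    [0, 0, 3, 0, 0, 0, -1, 0, 0],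
    [0, -1, 0, 3, 0, 0, 0, 0, 0],
    [-1, 0, 0, 0, 1+x, 0, 0, 0, -1],
    [0, 0, 0, 0, 0, x+2, 0, -1, 0],
    [0, 0, -1, 0, 0, 0, x+2, 0, 0],
    [0, 0, 0, 0, 0, -1, 0, 3, 0],
    [-1, 0, 0, 0, -1, 0, 0, 0, 1+x]]"

lemma Gamma_rho_matrix_carrier: "Gamma_rho_matrix x \<in> carrier_mat 9 9"
  by (simp add: Gamma_rho_matrix_def mat_of_rows_list_def numeral_eq_Suc)

lemma Gamma_rho_matrix_dims [simp]: "dim_row (Gamma_rho_matrix x) = 9" "dim_col (Gamma_rho_matrix x) = 9"
  using Gamma_rho_matrix_carrier[of x] by auto

lemma id_tensor_Gamma_rho_a:
  "id_tensor_map Gamma (rho_a a) = (rho_norm a / 2) \<cdot>\<^sub>m Gamma_rho_matrix (complex_of_real a)"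
proof (rule eq_matI)
  fix i j assume "i < dim_row ((rho_norm a / 2) \<cdot>\<^sub>m Gamma_rho_matrix (complex_of_real a))"
    "j < dim_col ((rho_norm a / 2) \<cdot>\<^sub>m Gamma_rho_matrix (complex_of_real a))"
  then have "i < 9" "j < 9" by simp_all
  then show "id_tensor_map Gamma (rho_a a) $$ (i,j)
      = ((rho_norm a / 2) \<cdot>\<^sub>m Gamma_rho_matrix (complex_of_real a)) $$ (i,j)"
    by (drule_tac less_9_cases, drule_tac less_9_cases, elim disjE)
       (simp_all add: id_tensor_map_def Gamma_def block33_def rho_a_scaled Gamma_rho_matrix_def
         mat_of_rows_list_def algebra_simps)
qed (simp_all add: id_tensor_map_def)

lemma Gamma_rho_matrix_max_ent_vec:
  "Gamma_rho_matrix x *\<^sub>v max_ent_vec = (x - 1) \<cdot>\<^sub>v max_ent_vec"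
proof (rule eq_vecI)
  fix i assume "i < dim_vec ((x - 1) \<cdot>\<^sub>v max_ent_vec)"
  then have "i < 9" by (simp add: max_ent_vec_def)
  then show "(Gamma_rho_matrix x *\<^sub>v max_ent_vec) $ i = ((x - 1) \<cdot>\<^sub>v max_ent_vec) $ i"
    by (drule_tac less_9_cases, elim disjE)
       (simp_all add: scalar_prod_def atLeast0LessThan sum_lessThan_9 max_ent_vec_def Gamma_rho_matrix_def
         mat_of_rows_list_def)
qed (simp add: max_ent_vec_def)

lemma eigenvector_id_tensor_Gamma_rho_a:
  assumes "a \<ge> 0"
  shows "eigenvector (id_tensor_map Gamma (rho_a a)) max_ent_vec (complex_of_real ((a - 1) / (18 + 6 * a)))"
proof -
  have "rho_norm a / 2 * (complex_of_real a - 1) = complex_of_real (1 / (3 * (3 + a)) / 2 * (a - 1))"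
    by (simp add: rho_norm_def)
  also have "1 / (3 * (3 + a)) / 2 * (a - 1) = (a - 1) / (18 + 6 * a)"
    using assms by (simp add: field_simps)
  finally have eigenvalue: "complex_of_real ((a - 1) / (18 + 6 * a)) = rho_norm a / 2 * (complex_of_real a - 1)" ..
  have "max_ent_vec $ 0 \<noteq> 0\<^sub>v 9 $ 0"
    by (simp add: max_ent_vec_def)
  then have "max_ent_vec \<noteq> 0\<^sub>v 9"
    by metis
  then show ?thesis
    unfolding eigenvector_def id_tensor_Gamma_rho_a eigenvalue
    by (simp add: smult_mat_mult_mat_vec Gamma_rho_matrix_max_ent_vec smult_smult_assoc)
qed

text \<open>Lists the basis as \<open>|00\<rangle>, |11\<rangle>, |22\<rangle>, |10\<rangle>, |01\<rangle>, |12\<rangle>, |21\<rangle>, |20\<rangle>, |02\<rangle>\<close>, which makes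
  \<open>Gamma_rho_matrix\<close> block diagonal.\<close>

definition block_perm :: "nat \<Rightarrow> nat" where
  "block_perm = Transposition.transpose 1 4 \<circ> Transposition.transpose 2 8 \<circ> Transposition.transpose 6 7"

lemma block_perm_eq:
  "block_perm i = (if i = 1 then 4 else if i = 4 then 1 else if i = 2 then 8 else if i = 8 then 2
     else if i = 6 then 7 else if i = 7 then 6 else i)"
  by (simp add: block_perm_def Transposition.transpose_def)

lemma block_perm_permutes: "block_perm permutes {0..<9}"
  unfolding block_perm_def by (intro permutes_compose permutes_swap_id) auto

definition max_ent_block :: "complex \<Rightarrow> complex mat" where
  "max_ent_block x = mat_of_rows_list 3 [[1+x, -1, -1], [-1, 1+x, -1], [-1, -1, 1+x]]"

definition pair_block :: "complex \<Rightarrow> complex \<Rightarrow> complex mat" where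
  "pair_block d e = mat_of_rows_list 2 [[d, -1], [-1, e]]"

lemma max_ent_block_carrier: "max_ent_block x \<in> carrier_mat 3 3"
  by (simp add: max_ent_block_def mat_of_rows_list_def numeral_eq_Suc)

lemma pair_block_carrier: "pair_block d e \<in> carrier_mat 2 2"
  by (simp add: pair_block_def mat_of_rows_list_def numeral_eq_Suc)

lemma max_ent_block_dims [simp]: "dim_row (max_ent_block x) = 3" "dim_col (max_ent_block x) = 3"
  using max_ent_block_carrier[of x] by auto

lemma pair_block_dims [simp]: "dim_row (pair_block d e) = 2" "dim_col (pair_block d e) = 2"
  using pair_block_carrier[of d e] by auto

lemma det_max_ent_block: "det (max_ent_block x) = (x - 1) * (x + 2)\<^sup>2"
  by (simp add: det_3x3[OF max_ent_block_carrier]; simp add: max_ent_block_def mat_of_rows_list_def)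
     (simp add: power2_eq_square algebra_simps)

lemma det_pair_block: "det (pair_block d e) = d * e - 1"
  by (simp add: det_2x2[OF pair_block_carrier]; simp add: pair_block_def mat_of_rows_list_def)

definition Gamma_rho_blocks :: "complex \<Rightarrow> complex mat" where
  "Gamma_rho_blocks x = four_block_mat (max_ent_block x) (0\<^sub>m 3 6) (0\<^sub>m 6 3)
     (four_block_mat (pair_block 3 (x + 2)) (0\<^sub>m 2 4) (0\<^sub>m 4 2)
       (four_block_mat (pair_block (x + 2) 3) (0\<^sub>m 2 2) (0\<^sub>m 2 2) (pair_block (x + 2) 3)))"

lemma Gamma_rho_blocks_dims [simp]: "dim_row (Gamma_rho_blocks x) = 9" "dim_col (Gamma_rho_blocks x) = 9"
  by (simp_all add: Gamma_rho_blocks_def)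

lemma Gamma_rho_matrix_permuted:
  "mat 9 9 (\<lambda>(i,j). Gamma_rho_matrix x $$ (block_perm i, block_perm j)) = Gamma_rho_blocks x"
proof (rule eq_matI)
  fix i j assume "i < dim_row (Gamma_rho_blocks x)" "j < dim_col (Gamma_rho_blocks x)"
  then have "i < 9" "j < 9" by simp_all
  then show "mat 9 9 (\<lambda>(i,j). Gamma_rho_matrix x $$ (block_perm i, block_perm j)) $$ (i,j)
      = Gamma_rho_blocks x $$ (i,j)"
    by (drule_tac less_9_cases, drule_tac less_9_cases, elim disjE)
       (simp_all add: Gamma_rho_blocks_def block_perm_eq Gamma_rho_matrix_def
         max_ent_block_def pair_block_def mat_of_rows_list_def)
qed simp_all

lemma det_Gamma_rho_matrix: "det (Gamma_rho_matrix x) = (x - 1) * (x + 2)\<^sup>2 * (3 * x + 5) ^ 3"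
proof -
  have C4: "four_block_mat (pair_block (x + 2) 3) (0\<^sub>m 2 2) (0\<^sub>m 2 2) (pair_block (x + 2) 3) \<in> carrier_mat 4 4"
    using four_block_carrier_mat[OF pair_block_carrier pair_block_carrier] by simp
  have C6: "four_block_mat (pair_block 3 (x + 2)) (0\<^sub>m 2 4) (0\<^sub>m 4 2)
      (four_block_mat (pair_block (x + 2) 3) (0\<^sub>m 2 2) (0\<^sub>m 2 2) (pair_block (x + 2) 3)) \<in> carrier_mat 6 6"
    using four_block_carrier_mat[OF pair_block_carrier C4] by simp
  have "det (Gamma_rho_matrix x) = det (Gamma_rho_blocks x)"
    using det_permute_rows_cols[OF Gamma_rho_matrix_carrier block_perm_permutes]
    by (simp add: Gamma_rho_matrix_permuted)
  also have "\<dots> = det (max_ent_block x) * (det (pair_block 3 (x + 2)) * (det (pair_block (x + 2) 3))\<^sup>2)"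
    unfolding Gamma_rho_blocks_def
    by (simp add: det_four_block_mat_upper_right_zero[OF max_ent_block_carrier refl _ C6]
        det_four_block_mat_upper_right_zero[OF pair_block_carrier refl _ C4]
        det_four_block_mat_upper_right_zero[OF pair_block_carrier refl _ pair_block_carrier] power2_eq_square)
  also have "\<dots> = (x - 1) * (x + 2)\<^sup>2 * (3 * x + 5) ^ 3"
    by (simp add: det_max_ent_block det_pair_block power2_eq_square power3_eq_cube algebra_simps)
  finally show ?thesis .
qed

lemma char_poly_coeff_0_id_tensor_Gamma_rho_a:
  "coeff (char_poly (id_tensor_map Gamma (rho_a a))) 0
    = complex_of_real ((1 / (6 * (3 + a))) ^ 9 * ((1 - a) * (a + 2)\<^sup>2 * (3 * a + 5) ^ 3))"
proof -
  have "coeff (char_poly (id_tensor_map Gamma (rho_a a))) 0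
      = - ((rho_norm a / 2) ^ 9 * det (Gamma_rho_matrix (complex_of_real a)))"
    unfolding id_tensor_Gamma_rho_a by (simp add: coeff_char_poly_0[of _ 9] Gamma_rho_matrix_carrier)
  then show ?thesis
    unfolding det_Gamma_rho_matrix rho_norm_def by (simp add: algebra_simps)
qed

lemma rho_a_not_separable:
  assumes "0 \<le> a" "a < 1"
  shows "\<not> separable (rho_a a)"
proof
  assume "separable (rho_a a)"
  then have "0 \<le> Re (choi_witness (rho_a a))"
    by (rule separable_choi_witness_nonneg)
  moreover have "choi_witness (rho_a a) = complex_of_real ((a - 1) / (18 + 6 * a)) * 3"
    using eigenvector_quadratic_form[OF eigenvector_id_tensor_Gamma_rho_a[OF assms(1)]]
    by (simp add: choi_witness_def max_ent_vec_def scalar_prod_def atLeast0LessThan sum_lessThan_9)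
  then have "Re (choi_witness (rho_a a)) = 3 * ((a - 1) / (18 + 6 * a))"
    by simp
  moreover have "(a - 1) / (18 + 6 * a) < 0"
    using assms by (simp add: divide_neg_pos)
  ultimately show False by linarith
qed

theorem mainTheorem2:
  fixes a :: real
  assumes "a \<ge> 1/2"
  shows "is_state 9 (rho_a a)
    \<and> psd 9 (partial_transpose_B (rho_a a))
    \<and> eigenvector (id_tensor_map Gamma (rho_a a)) max_ent_vec
         (complex_of_real ((a - 1) / (18 + 6 * a)))
    \<and> coeff (char_poly (id_tensor_map Gamma (rho_a a))) 0
         = - det (id_tensor_map Gamma (rho_a a))
    \<and> (a < 1 \<longrightarrow> coeff (char_poly (id_tensor_map Gamma (rho_a a))) 0 \<in> \<real>
               \<and> Re (coeff (char_poly (id_tensor_map Gamma (rho_a a))) 0) > 0)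
    \<and> (a < 1 \<longrightarrow> entangled (rho_a a))"
proof -
  have a: "a \<ge> 0" using assms by simp
  have state: "is_state 9 (rho_a a)"
    unfolding is_state_def using rho_a_psd[OF assms] rho_a_trace[OF a] by simp
  have "id_tensor_map Gamma (rho_a a) \<in> carrier_mat 9 9"
    by (simp add: id_tensor_map_def)
  from coeff_char_poly_0[OF this]
  have D9: "coeff (char_poly (id_tensor_map Gamma (rho_a a))) 0 = - det (id_tensor_map Gamma (rho_a a))"
    by simp
  have D9_pos: "coeff (char_poly (id_tensor_map Gamma (rho_a a))) 0 \<in> \<real>
      \<and> Re (coeff (char_poly (id_tensor_map Gamma (rho_a a))) 0) > 0" if "a < 1"
    using a that unfolding char_poly_coeff_0_id_tensor_Gamma_rho_a by simp
  show ?thesis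
    using state partial_transpose_rho_a rho_a_psd[OF assms] eigenvector_id_tensor_Gamma_rho_a[OF a]
      D9 D9_pos rho_a_not_separable[OF a]
    unfolding entangled_def by simp
qed

end
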